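(* Let $G=(V,E)$ be a finite graph with special vertex $i$, symmetric edge weights $w_E$ (with $w_E(u,v)=0$ for $uv\notin E$) and vertex weights $w_V$ (nonnegative, not identically zero), such that $G$ and $G-i$ are each positively connected. Let $f_i$ be a solution of $$\min_{\|g\|_w=1,\ g(i)=0}\ \sum_{jk\in E} w_E(j,k)\,(g(k)-g(j))^2,$$ positive on $V\setminus\{i\}$. Fix vertices $j,k$ such that $G-j$ is not connected and $i$ and $k$ lie in different components of $G-j$, and suppose $w_V(k)>0$. Then $f_i(k)>f_i(j)$. Moreover, the spectral path from $k$ to $i$ passes through $j$.
   Context: $\|g\|_w=\sqrt{\sum_{u\in V}w_V(u)g(u)^2}$; each edge is counted once. A weighted graph is positively connected if any two vertices are joined by a path of positive-weight edges; $G-x$ is $G$ with vertex $x$ deleted. Edges of weight zero are regarded as deleted, so neighborhoods $N(u)$, paths and connectivity refer to positive-weight edges. The spectral path from $k$ to $i$ is the sequence $k=k_0,k_1,\dots$ where $k_{\ell+1}$ is a neighbor of $k_\ell$ minimizing $f_i$ over $N(k_\ell)$ (ties broken arbitrarily), stopped when $i$ is reached; under the hypotheses it is well-defined, with $f_i$ strictly decreasing along it. *)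

theory Defs
  imports Main "HOL-Library.Extended_Real" Complex_Main
begin

text \<open>Weighted graph on a finite vertex set V. Edge weights wE (symmetric, nonnegative);
  edges of weight zero are regarded as deleted. Self-loops are never neighbours.\<close>

definition pos_adj :: "('a \<Rightarrow> 'a \<Rightarrow> real) \<Rightarrow> 'a set \<Rightarrow> 'a \<Rightarrow> 'a \<Rightarrow> bool" where
  "pos_adj wE S u v \<longleftrightarrow> u \<in> S \<and> v \<in> S \<and> u \<noteq> v \<and> wE u v > 0"

definition nbrs :: "('a \<Rightarrow> 'a \<Rightarrow> real) \<Rightarrow> 'a set \<Rightarrow> 'a \<Rightarrow> 'a set" where
  "nbrs wE V u = {v. pos_adj wE V u v}"

definition pos_reach :: "('a \<Rightarrow> 'a \<Rightarrow> real) \<Rightarrow> 'a set \<Rightarrow> 'a \<Rightarrow> 'a \<Rightarrow> bool" where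
  "pos_reach wE S u v \<longleftrightarrow> (pos_adj wE S)\<^sup>*\<^sup>* u v"

definition pos_connected :: "('a \<Rightarrow> 'a \<Rightarrow> real) \<Rightarrow> 'a set \<Rightarrow> bool" where
  "pos_connected wE S \<longleftrightarrow> (\<forall>u\<in>S. \<forall>v\<in>S. pos_reach wE S u v)"

definition wnorm :: "('a \<Rightarrow> real) \<Rightarrow> 'a set \<Rightarrow> ('a \<Rightarrow> real) \<Rightarrow> real" where
  "wnorm wV V g = sqrt (\<Sum>u\<in>V. wV u * (g u)\<^sup>2)"

text \<open>Dirichlet energy, each edge counted once (symmetric weights: half of the ordered double sum;
  loop terms vanish).\<close>
definition energy :: "('a \<Rightarrow> 'a \<Rightarrow> real) \<Rightarrow> 'a set \<Rightarrow> ('a \<Rightarrow> real) \<Rightarrow> real" where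
  "energy wE V g = (1/2) * (\<Sum>j\<in>V. \<Sum>k\<in>V. wE j k * (g k - g j)\<^sup>2)"

definition is_minimizer :: "('a \<Rightarrow> 'a \<Rightarrow> real) \<Rightarrow> ('a \<Rightarrow> real) \<Rightarrow> 'a set \<Rightarrow> 'a \<Rightarrow> ('a \<Rightarrow> real) \<Rightarrow> bool" where
  "is_minimizer wE wV V i f \<longleftrightarrow>
     wnorm wV V f = 1 \<and> f i = 0 \<and>
     (\<forall>g. wnorm wV V g = 1 \<and> g i = 0 \<longrightarrow> energy wE V f \<le> energy wE V g)"

definition spectral_seq :: "('a \<Rightarrow> 'a \<Rightarrow> real) \<Rightarrow> 'a set \<Rightarrow> ('a \<Rightarrow> real) \<Rightarrow> 'a \<Rightarrow> 'a \<Rightarrow> (nat \<Rightarrow> 'a) \<Rightarrow> bool" where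
  "spectral_seq wE V f k i s \<longleftrightarrow> s 0 = k \<and>
     (\<forall>l. s l \<noteq> i \<longrightarrow> s (Suc l) \<in> nbrs wE V (s l) \<and>
                        (\<forall>v\<in>nbrs wE V (s l). f (s (Suc l)) \<le> f v))"

definition path_passes :: "'a \<Rightarrow> 'a \<Rightarrow> (nat \<Rightarrow> 'a) \<Rightarrow> bool" where
  "path_passes i j s \<longleftrightarrow> (\<exists>n m. s n = i \<and> (\<forall>l<n. s l \<noteq> i) \<and> m \<le> n \<and> s m = j)"

end

theory Submission
  imports Defs
begin

text \<open>Since f vanishes at i, is positive elsewhere and G is connected, \<open>\<lambda> = energy f > 0\<close>,
  and the first variation of the Rayleigh quotient at f gives the Euler--Lagrange equation
  \<open>\<lambda> wV(u) f(u) = \<Sum>\<^sub>v wE(u,v) (f(u) - f(v))\<close> at every \<open>u \<noteq> i\<close>. Hence at a vertex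
  \<open>u \<noteq> i\<close> where f has a local minimum, \<open>wV(u) = 0\<close> and f is constant on the neighbourhood.

  If \<open>f(k) \<le> f(j)\<close>, the minimum of f over the component C of k in G - j (which avoids i) is a
  local minimum in G, because j is the only neighbour of C outside C; so it spreads over all of C
  and forces \<open>wV(k) = 0\<close>. Along the spectral path every vertex has a neighbour with larger f
  (its predecessor) or positive weight (k itself), so by the same equation it has a strictly lower
  neighbour: f strictly decreases, the path reaches i, and since it is a path from k to i it
  cannot avoid j.\<close>

lemma pos_reach_sym:
  assumes "\<And>u v. wE u v = wE v u" and "pos_reach wE S u v"
  shows "pos_reach wE S v u"
proof -
  have "symp (pos_adj wE S)"
    using assms(1) by (auto intro: sympI simp: pos_adj_def)
  then show ?thesis
    using assms(2) unfolding pos_reach_def by (metis symp_rtranclp sympD)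
qed

lemma pos_reach_closed:
  assumes "pos_reach wE S u v" and "u \<in> M"
    and "\<And>a b. a \<in> M \<Longrightarrow> pos_adj wE S a b \<Longrightarrow> b \<in> M"
  shows "v \<in> M"
  using assms(1) unfolding pos_reach_def
  by (induction rule: rtranclp_induct) (use assms(2,3) in auto)

lemma pos_reach_step:
  assumes "pos_reach wE S u v" and "pos_adj wE S v w"
  shows "pos_reach wE S u w"
  using assms unfolding pos_reach_def by (rule rtranclp.rtrancl_into_rtrancl)

lemma pos_reach_mem:
  assumes "pos_reach wE S u v" and "u \<in> S"
  shows "v \<in> S"
  using pos_reach_closed[OF assms(1)] assms(2) by (auto simp: pos_adj_def)

lemma nbrs_subset: "nbrs wE V u \<subseteq> V"
  by (auto simp: nbrs_def pos_adj_def)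

lemma nbrs_sym:
  assumes "\<And>u v. wE u v = wE v u"
  shows "v \<in> nbrs wE V u \<longleftrightarrow> u \<in> nbrs wE V v"
  using assms by (auto simp: nbrs_def pos_adj_def)

lemma spectral_seq_pos_reach:
  assumes "spectral_seq wE V f k i s" and "\<forall>l<n. s l \<noteq> i" and "\<forall>m\<le>n. s m \<noteq> j"
  shows "pos_reach wE (V - {j}) k (s n)"
  using assms(2,3)
proof (induction n)
  case 0
  then show ?case
    using assms(1) by (simp add: spectral_seq_def pos_reach_def)
next
  case (Suc n)
  have "pos_adj wE V (s n) (s (Suc n))"
    using assms(1) Suc.prems unfolding spectral_seq_def nbrs_def by simp
  then have "pos_adj wE (V - {j}) (s n) (s (Suc n))"
    using Suc.prems by (auto simp: pos_adj_def)
  then show ?case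
    using Suc by (auto intro: pos_reach_step)
qed

lemma finite_no_strict_descent:
  fixes g :: "'a \<Rightarrow> 'b::linorder"
  assumes "finite A" and "\<And>n. s n \<in> A" and "\<And>n. g (s (Suc n)) < g (s n)"
  shows False
proof -
  have "g (s b) < g (s a)" if "a < b" for a b
    using that by (induction b) (auto simp: less_Suc_eq intro: assms(3) less_trans)
  then have "inj s"
    by (metis injI less_irrefl linorder_neqE_nat)
  moreover have "finite (range s)"
    using assms(1,2) by (meson finite_subset image_subsetI)
  ultimately show False
    using finite_imageD by blast
qed

definition wnorm_sq :: "('a \<Rightarrow> real) \<Rightarrow> 'a set \<Rightarrow> ('a \<Rightarrow> real) \<Rightarrow> real" where
  "wnorm_sq wV V g = (\<Sum>u\<in>V. wV u * (g u)\<^sup>2)"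

lemma wnorm_sq_scale: "wnorm_sq wV V (\<lambda>x. g x / c) = wnorm_sq wV V g / c\<^sup>2"
  unfolding wnorm_sq_def by (simp add: sum_divide_distrib power_divide)

lemma wnorm_sq_add_scaled:
  "wnorm_sq wV V (\<lambda>x. f x + t * h x)
     = wnorm_sq wV V f + 2 * t * (\<Sum>u\<in>V. wV u * f u * h u) + t\<^sup>2 * wnorm_sq wV V h"
proof -
  have "wV u * (f u + t * h u)\<^sup>2
      = wV u * (f u)\<^sup>2 + 2 * t * (wV u * f u * h u) + t\<^sup>2 * (wV u * (h u)\<^sup>2)" for u
    by (simp add: power2_eq_square algebra_simps)
  then show ?thesis
    unfolding wnorm_sq_def by (simp add: sum.distrib sum_distrib_left)
qed

lemma energy_nonneg:
  assumes "\<And>u v. wE u v \<ge> 0"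
  shows "energy wE V g \<ge> 0"
  unfolding energy_def using assms by (intro mult_nonneg_nonneg sum_nonneg) auto

lemma energy_scale: "energy wE V (\<lambda>x. g x / c) = energy wE V g / c\<^sup>2"
  unfolding energy_def
  by (simp add: sum_divide_distrib power_divide diff_divide_distrib[symmetric] mult.commute)

lemma energy_add_scaled:
  "energy wE V (\<lambda>x. f x + t * h x) = energy wE V f
     + t * (\<Sum>j\<in>V. \<Sum>k\<in>V. wE j k * (f k - f j) * (h k - h j)) + t\<^sup>2 * energy wE V h"
proof -
  have "wE j k * ((f k + t * h k) - (f j + t * h j))\<^sup>2 = wE j k * (f k - f j)\<^sup>2
     + 2 * t * (wE j k * (f k - f j) * (h k - h j)) + t\<^sup>2 * (wE j k * (h k - h j)\<^sup>2)" for j k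
    by (simp add: power2_eq_square algebra_simps)
  then have "(\<Sum>j\<in>V. \<Sum>k\<in>V. wE j k * ((f k + t * h k) - (f j + t * h j))\<^sup>2)
     = (\<Sum>j\<in>V. \<Sum>k\<in>V. wE j k * (f k - f j)\<^sup>2)
     + 2 * t * (\<Sum>j\<in>V. \<Sum>k\<in>V. wE j k * (f k - f j) * (h k - h j))
     + t\<^sup>2 * (\<Sum>j\<in>V. \<Sum>k\<in>V. wE j k * (h k - h j)\<^sup>2)"
    by (simp only: sum.distrib sum_distrib_left)
  then show ?thesis
    unfolding energy_def by (simp add: algebra_simps)
qed

lemma edge_term_le_energy:
  assumes "finite V" and "\<And>u v. wE u v \<ge> 0" and "a \<in> V" and "b \<in> V"
  shows "wE a b * (f b - f a)\<^sup>2 \<le> 2 * energy wE V f"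
proof -
  have "wE a b * (f b - f a)\<^sup>2 \<le> (\<Sum>k\<in>V. wE a k * (f k - f a)\<^sup>2)"
    using assms by (intro member_le_sum) auto
  also have "\<dots> \<le> (\<Sum>j\<in>V. \<Sum>k\<in>V. wE j k * (f k - f j)\<^sup>2)"
    using assms by (intro member_le_sum sum_nonneg) auto
  finally show ?thesis
    unfolding energy_def by simp
qed

lemma energy_pos_if_nonconstant:
  assumes "finite V" and "\<And>u v. wE u v \<ge> 0" and "pos_connected wE V"
    and "a \<in> V" and "b \<in> V" and "f a \<noteq> f b"
  shows "energy wE V f > 0"
proof (rule ccontr)
  assume "\<not> energy wE V f > 0"
  then have flat: "f y = f x" if "pos_adj wE V x y" for x y
  proof -
    have xy: "x \<in> V" "y \<in> V" "wE x y > 0"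
      using that by (auto simp: pos_adj_def)
    have "wE x y * (f y - f x)\<^sup>2 \<le> 2 * energy wE V f"
      using assms(1,2) xy(1,2) by (rule edge_term_le_energy)
    then have "wE x y * (f y - f x)\<^sup>2 \<le> 0"
      using \<open>\<not> energy wE V f > 0\<close> by linarith
    then show ?thesis
      using xy(3) by (simp add: mult_le_0_iff)
  qed
  have "pos_reach wE V a b"
    using assms(3-5) unfolding pos_connected_def by blast
  then have "b \<in> {v. f v = f a}"
    by (rule pos_reach_closed) (auto dest: flat)
  then show False
    using assms(6) by simp
qed

lemma linear_coeff_eq_0_if_nonpos:
  fixes a b :: real
  assumes "\<And>t. t * a + t\<^sup>2 * b \<le> 0"
  shows "a = 0"
proof -
  define c where "c = \<bar>b\<bar> + 1"
  have c: "c > 0" "c + b \<ge> 1"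
    unfolding c_def by auto
  have "((a / c) * a + (a / c)\<^sup>2 * b) * c\<^sup>2 \<le> 0"
    using assms[of "a / c"] by (simp add: mult_nonpos_nonneg)
  moreover have "((a / c) * a + (a / c)\<^sup>2 * b) * c\<^sup>2 = a\<^sup>2 * (c + b)"
    using c by (simp add: field_simps power2_eq_square)
  moreover have "a\<^sup>2 \<le> a\<^sup>2 * (c + b)"
    using c by (metis mult.right_neutral mult_left_mono zero_le_power2)
  ultimately have "a\<^sup>2 \<le> 0"
    by linarith
  then show "a = 0"
    by simp
qed

locale ground_state =
  fixes V :: "'a set" and wE :: "'a \<Rightarrow> 'a \<Rightarrow> real" and wV :: "'a \<Rightarrow> real"
    and i :: 'a and f :: "'a \<Rightarrow> real"
  assumes finite_V: "finite V"
    and wE_sym: "wE u v = wE v u"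
    and wE_nonneg: "wE u v \<ge> 0"
    and wV_nonneg: "u \<in> V \<Longrightarrow> wV u \<ge> 0"
    and minimizer: "is_minimizer wE wV V i f"
begin

lemma pos_reach_commute: "pos_reach wE S u v \<longleftrightarrow> pos_reach wE S v u"
  using pos_reach_sym[of wE] wE_sym by blast

lemma f_root: "f i = 0"
  using minimizer unfolding is_minimizer_def by simp

lemma wnorm_sq_f: "wnorm_sq wV V f = 1"
  using minimizer unfolding is_minimizer_def wnorm_def wnorm_sq_def by simp

lemma wnorm_sq_nonneg: "wnorm_sq wV V g \<ge> 0"
  unfolding wnorm_sq_def using wV_nonneg by (simp add: sum_nonneg)

lemma energy_le_Rayleigh:
  assumes "g i = 0"
  shows "energy wE V f * wnorm_sq wV V g \<le> energy wE V g"
proof (cases "wnorm_sq wV V g = 0")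
  case True
  then show ?thesis
    using energy_nonneg[of wE, OF wE_nonneg] by simp
next
  case False
  then have pos: "wnorm_sq wV V g > 0"
    using wnorm_sq_nonneg[of g] by linarith
  define c where "c = sqrt (wnorm_sq wV V g)"
  have c: "c > 0" "c\<^sup>2 = wnorm_sq wV V g"
    unfolding c_def using pos by auto
  have "wnorm wV V (\<lambda>x. g x / c) = 1"
    using c wnorm_sq_scale[of wV V g c] pos unfolding wnorm_def wnorm_sq_def by simp
  then have "energy wE V f \<le> energy wE V (\<lambda>x. g x / c)"
    using minimizer assms unfolding is_minimizer_def by simp
  also have "\<dots> = energy wE V g / wnorm_sq wV V g"
    using energy_scale c(2) by metis
  finally show ?thesis
    using pos by (simp add: field_simps)
qed

lemma weak_Euler_Lagrange:
  assumes "h i = 0"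
  shows "2 * energy wE V f * (\<Sum>u\<in>V. wV u * f u * h u)
         = (\<Sum>j\<in>V. \<Sum>k\<in>V. wE j k * (f k - f j) * (h k - h j))"
proof -
  define P where "P = (\<Sum>u\<in>V. wV u * f u * h u)"
  define B where "B = (\<Sum>j\<in>V. \<Sum>k\<in>V. wE j k * (f k - f j) * (h k - h j))"
  define lam where "lam = energy wE V f"
  have "t * (2 * lam * P - B) + t\<^sup>2 * (lam * wnorm_sq wV V h - energy wE V h) \<le> 0" for t
  proof -
    have "lam * wnorm_sq wV V (\<lambda>x. f x + t * h x) \<le> energy wE V (\<lambda>x. f x + t * h x)"
      unfolding lam_def using energy_le_Rayleigh f_root assms by simp
    then show ?thesis
      unfolding energy_add_scaled wnorm_sq_add_scaled wnorm_sq_f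
        P_def[symmetric] B_def[symmetric] lam_def[symmetric]
      by (simp add: algebra_simps)
  qed
  then show ?thesis
    using linear_coeff_eq_0_if_nonpos unfolding P_def B_def lam_def by fastforce
qed

lemma Euler_Lagrange:
  assumes "u \<in> V" and "u \<noteq> i"
  shows "energy wE V f * wV u * f u = (\<Sum>v\<in>V. wE u v * (f u - f v))"
proof -
  define h where "h x = (if x = u then 1 else 0 :: real)" for x
  have "(\<Sum>j\<in>V. \<Sum>k\<in>V. wE j k * (f k - f j) * (h k - h j))
      = (\<Sum>j\<in>V. \<Sum>k\<in>V. wE j k * (f k - f j) * h k)
        - (\<Sum>j\<in>V. \<Sum>k\<in>V. wE j k * (f k - f j) * h j)"
    by (simp add: right_diff_distrib sum_subtractf)
  also have "(\<Sum>j\<in>V. \<Sum>k\<in>V. wE j k * (f k - f j) * h k) = (\<Sum>j\<in>V. wE j u * (f u - f j))"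
    unfolding h_def using finite_V assms(1) by (simp add: if_distrib cong: if_cong)
  also have "(\<Sum>j\<in>V. \<Sum>k\<in>V. wE j k * (f k - f j) * h j)
      = (\<Sum>j\<in>V. h j * (\<Sum>k\<in>V. wE j k * (f k - f j)))"
    by (simp add: sum_distrib_left mult.commute)
  also have "\<dots> = (\<Sum>k\<in>V. wE u k * (f k - f u))"
    unfolding h_def using finite_V assms(1)
    by (simp add: if_distrib[of "\<lambda>x. x * _"] cong: if_cong)
  also have "(\<Sum>j\<in>V. wE j u * (f u - f j)) - (\<Sum>k\<in>V. wE u k * (f k - f u))
      = 2 * (\<Sum>v\<in>V. wE u v * (f u - f v))"
    by (simp add: wE_sym[of _ u] sum_subtractf[symmetric] sum_distrib_left algebra_simps)
  finally have "2 * energy wE V f * (\<Sum>x\<in>V. wV x * f x * h x) = 2 * (\<Sum>v\<in>V. wE u v * (f u - f v))"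
    using weak_Euler_Lagrange[of h] assms(2) unfolding h_def by simp
  moreover have "(\<Sum>x\<in>V. wV x * f x * h x) = wV u * f u"
    unfolding h_def using finite_V assms(1) by (simp add: if_distrib cong: if_cong)
  ultimately show ?thesis
    by simp
qed

end

locale positive_ground_state = ground_state +
  assumes root_in_V: "i \<in> V"
    and connected: "pos_connected wE V"
    and f_pos: "u \<in> V - {i} \<Longrightarrow> f u > 0"
begin

lemma energy_pos:
  assumes "u \<in> V - {i}"
  shows "energy wE V f > 0"
  using energy_pos_if_nonconstant[OF finite_V _ connected root_in_V, of u f]
    wE_nonneg assms f_pos[OF assms] f_root by auto

lemma local_min_imp_flat:
  assumes u: "u \<in> V - {i}" and min: "\<And>w. w \<in> nbrs wE V u \<Longrightarrow> f u \<le> f w"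
  shows "wV u = 0 \<and> (\<forall>w\<in>nbrs wE V u. f w = f u)"
proof -
  have terms: "wE u v * (f u - f v) \<le> 0" if "v \<in> V" for v
  proof (cases "v \<in> nbrs wE V u")
    case True
    then show ?thesis
      using min wE_nonneg by (simp add: mult_nonneg_nonpos)
  next
    case False
    then have "wE u v = 0 \<or> v = u"
      using that u wE_nonneg[of u v] by (auto simp: nbrs_def pos_adj_def)
    then show ?thesis
      by auto
  qed
  have "(\<Sum>v\<in>V. wE u v * (f u - f v)) \<le> 0"
    using terms by (rule sum_nonpos)
  moreover have "energy wE V f * wV u * f u \<ge> 0"
    using energy_pos[OF u] wV_nonneg f_pos[OF u] u by simp
  ultimately have lhs0: "energy wE V f * wV u * f u = 0"
    and rhs0: "(\<Sum>v\<in>V. - (wE u v * (f u - f v))) = 0"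
    using Euler_Lagrange[of u] u by (simp_all add: sum_negf)
  have "wV u = 0"
    using lhs0 energy_pos[OF u] f_pos[OF u] by simp
  moreover have "wE u w * (f u - f w) = 0" if "w \<in> V" for w
    using rhs0 terms that finite_V by (subst (asm) sum_nonneg_eq_0_iff) auto
  then have "f w = f u" if "w \<in> nbrs wE V u" for w
    using that by (fastforce simp: nbrs_def pos_adj_def)
  ultimately show ?thesis
    by blast
qed

lemma exists_nbr_less:
  assumes "u \<in> V - {i}" and "wV u > 0 \<or> (\<exists>w\<in>nbrs wE V u. f u < f w)"
  shows "\<exists>w\<in>nbrs wE V u. f w < f u"
proof (rule ccontr)
  assume "\<not> ?thesis"
  then have "wV u = 0 \<and> (\<forall>w\<in>nbrs wE V u. f w = f u)"
    by (intro local_min_imp_flat[OF assms(1)]) (simp add: not_less)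
  then show False
    using assms(2) by auto
qed

lemma separating_vertex_value_less:
  assumes k: "k \<in> V" "k \<noteq> j" and sep: "\<not> pos_reach wE (V - {j}) i k" and "wV k > 0"
  shows "f j < f k"
proof (rule ccontr)
  assume "\<not> f j < f k"
  define C where "C = {v. pos_reach wE (V - {j}) k v}"
  have "k \<in> C"
    unfolding C_def pos_reach_def by simp
  have C_sub: "C \<subseteq> V - {j} - {i}"
    using pos_reach_mem[of wE "V - {j}" k] k sep pos_reach_commute unfolding C_def by blast
  then have "finite C"
    using finite_V finite_subset by blast
  define \<mu> where "\<mu> = Min (f ` C)"
  have "\<mu> \<in> f ` C"
    unfolding \<mu>_def using \<open>finite C\<close> \<open>k \<in> C\<close> by (intro Min_in) auto
  then obtain u0 where u0: "u0 \<in> C" "f u0 = \<mu>"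
    by auto
  have \<mu>_le: "\<mu> \<le> f v" if "v \<in> C" for v
    unfolding \<mu>_def using \<open>finite C\<close> that by simp
  have flat: "wV v = 0 \<and> (\<forall>w\<in>nbrs wE V v. f w = \<mu>)" if "v \<in> C" "f v = \<mu>" for v
  proof -
    have "f v \<le> f w" if w: "w \<in> nbrs wE V v" for w
    proof (cases "w = j")
      case True
      then show ?thesis
        using \<open>v \<in> C\<close> \<open>f v = \<mu>\<close> \<mu>_le[OF \<open>k \<in> C\<close>] \<open>\<not> f j < f k\<close> by simp
    next
      case False
      then have "pos_adj wE (V - {j}) v w"
        using w C_sub \<open>v \<in> C\<close> by (auto simp: nbrs_def pos_adj_def)
      then have "w \<in> C"
        using \<open>v \<in> C\<close> unfolding C_def by (auto intro: pos_reach_step)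
      then show ?thesis
        using \<mu>_le \<open>f v = \<mu>\<close> by simp
    qed
    then show ?thesis
      using local_min_imp_flat[of v] C_sub that by auto
  qed
  have "pos_reach wE (V - {j}) u0 k"
    using u0(1) pos_reach_commute unfolding C_def by blast
  then have "k \<in> {v \<in> C. f v = \<mu>}"
  proof (rule pos_reach_closed)
    fix a b
    assume a: "a \<in> {v \<in> C. f v = \<mu>}" and ab: "pos_adj wE (V - {j}) a b"
    then have "b \<in> C"
      unfolding C_def by (auto intro: pos_reach_step)
    moreover have "b \<in> nbrs wE V a"
      using ab by (simp add: nbrs_def pos_adj_def)
    ultimately show "b \<in> {v \<in> C. f v = \<mu>}"
      using flat a by auto
  qed (use u0 in auto)
  then show False
    using flat \<open>wV k > 0\<close> by auto
qed

lemma spectral_seq_reaches_root: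
  assumes s: "spectral_seq wE V f k i s" and "k \<in> V" and "wV k > 0"
  shows "\<exists>n. s n = i"
proof (rule ccontr)
  assume "\<nexists>n. s n = i"
  then have not_root: "s n \<noteq> i" for n
    by blast
  define Q where "Q u \<longleftrightarrow> u \<in> V \<and> (wV u > 0 \<or> (\<exists>w\<in>nbrs wE V u. f u < f w))" for u
  have step: "Q (s (Suc n)) \<and> f (s (Suc n)) < f (s n)" if Qn: "Q (s n)" for n
  proof -
    obtain w where w: "w \<in> nbrs wE V (s n)" "f w < f (s n)"
      using exists_nbr_less[of "s n"] Qn not_root unfolding Q_def by blast
    have "s (Suc n) \<in> nbrs wE V (s n)" and "f (s (Suc n)) \<le> f w"
      using s not_root w unfolding spectral_seq_def by blast+
    then show ?thesis
      using w nbrs_sym[of wE, OF wE_sym] nbrs_subset unfolding Q_def by fastforce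
  qed
  have Q: "Q (s n)" for n
  proof (induction n)
    case 0
    then show ?case
      using s assms(2,3) unfolding Q_def spectral_seq_def by simp
  next
    case (Suc n)
    then show ?case
      using step by blast
  qed
  show False
    using finite_no_strict_descent[OF finite_V, of s f] Q step unfolding Q_def by blast
qed

end

theorem theorem10:
  fixes V :: "'a set" and wE :: "'a \<Rightarrow> 'a \<Rightarrow> real" and wV :: "'a \<Rightarrow> real"
    and f :: "'a \<Rightarrow> real" and i j k :: 'a
  assumes finV: "finite V" and iV: "i \<in> V"
    and wE_sym: "\<And>u v. wE u v = wE v u"
    and wE_nonneg: "\<And>u v. wE u v \<ge> 0"
    and wV_nonneg: "\<And>u. u \<in> V \<Longrightarrow> wV u \<ge> 0"
    and wV_nonzero: "\<exists>u\<in>V. wV u \<noteq> 0"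
    and connG: "pos_connected wE V"
    and connGi: "pos_connected wE (V - {i})"
    and fmin: "is_minimizer wE wV V i f"
    and fpos: "\<And>u. u \<in> V - {i} \<Longrightarrow> f u > 0"
    and jV: "j \<in> V" and kV: "k \<in> V"
    and Gj_disconn: "\<not> pos_connected wE (V - {j})"
    and ij: "i \<noteq> j" and kj: "k \<noteq> j"
    and sep: "\<not> pos_reach wE (V - {j}) i k"
    and wVk: "wV k > 0"
  shows "f k > f j \<and> (\<forall>s. spectral_seq wE V f k i s \<longrightarrow> path_passes i j s)"
proof -
  interpret positive_ground_state V wE wV i f
    by unfold_locales (use assms in auto)
  have "path_passes i j s" if s: "spectral_seq wE V f k i s" for s
  proof -
    obtain n where n: "s n = i" "\<forall>l<n. s l \<noteq> i"
      using spectral_seq_reaches_root[OF s kV wVk] exists_least_iff[of "\<lambda>n. s n = i"] by blast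
    have "\<exists>m\<le>n. s m = j"
    proof (rule ccontr)
      assume "\<not> ?thesis"
      then have "pos_reach wE (V - {j}) k i"
        using spectral_seq_pos_reach[OF s n(2)] n(1) by auto
      then show False
        using sep pos_reach_commute by blast
    qed
    then show ?thesis
      unfolding path_passes_def using n by blast
  qed
  then show ?thesis
    using separating_vertex_value_less[OF kV kj sep wVk] by blast
qed

end
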